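(* Let $\mu\in\mathbb{R}^J$, $T\in\mathbb{R}$, and let $\Lambda\in\mathbb{R}^{J\times J}$ be symmetric positive definite. Consider the constraint \[ \mu^{\top}y+\sqrt{y^{\top}\Lambda y}\le T,\qquad y\in\{0,1\}^J. \tag{C} \] Let $\Delta^{L}$ be an optimal solution of the semidefinite program \[ \min_{\Delta}\ \|\Delta-\Lambda\|_2\ \ \text{s.t.}\ \ 0\preceq\Delta\preceq\Lambda,\ \ 2\sum_{s=1}^J\Delta_{rs}\ge\Delta_{rr}\ \forall r\in[J],\ \ \Delta_{rs}\le 0\ \forall r,s\in[J],\ r\ne s, \] and let $\Delta^{U}$ be an optimal solution of the semidefinite program \[ \min_{\Delta}\ \|\Delta-\Lambda\|_2\ \ \text{s.t.}\ \ \Delta\succeq\Lambda,\ \ 2\sum_{s=1}^J\Delta_{rs}\ge\Delta_{rr}\ \forall r\in[J],\ \ \Delta_{rs}\le 0\ \forall r,s\in[J],\ r\ne s, \] where in both programs $\Delta$ ranges over symmetric $J\times J$ matrices. Then: (a) the function $g^{L}(y)=\mu^{\top}y+\sqrt{y^{\top}\Delta^{L}y}$ is submodular on $\{0,1\}^J$, and every $y$ satisfying (C) satisfies $\mu^{\top}y+\sqrt{y^{\top}\Delta^{L}y}\le T$; (b) the function $g^{U}(y)=\mu^{\top}y+\sqrt{y^{\top}\Delta^{U}y}$ is submodular on $\{0,1\}^J$, and every $y\in\{0,1\}^J$ satisfying $\mu^{\top}y+\sqrt{y^{\top}\Delta^{U}y}\le T$ satisfies (C).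
   Context: $[J]=\{1,\dots,J\}$; $A\preceq B$ means $B-A$ is positive semidefinite; $\|\cdot\|_2$ is the matrix $\ell^2$ norm. A vector $y\in\{0,1\}^J$ is identified with the subset $\{j:y_j=1\}$. A set function $h$ on subsets of $[J]$ is submodular if $h(R\cup\{j\})-h(R)\ge h(S\cup\{j\})-h(S)$ for all $R\subseteq S\subseteq[J]$ and $j\in[J]\setminus S$. *)

theory Defs
  imports "HOL-Analysis.Analysis"
begin

text \<open>J x J real matrices are indexed by a finite type 'n, with J = CARD('n).\<close>

definition symmetric_mat :: "real^'n^'n \<Rightarrow> bool" where
  "symmetric_mat A \<longleftrightarrow> transpose A = A"

definition psd :: "real^'n^'n \<Rightarrow> bool" where
  "psd A \<longleftrightarrow> (\<forall>x. 0 \<le> x \<bullet> (A *v x))"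

definition pos_def :: "real^'n^'n \<Rightarrow> bool" where
  "pos_def A \<longleftrightarrow> (\<forall>x. x \<noteq> 0 \<longrightarrow> 0 < x \<bullet> (A *v x))"

definition loewner_le :: "real^'n^'n \<Rightarrow> real^'n^'n \<Rightarrow> bool" where
  "loewner_le A B \<longleftrightarrow> psd (B - A)"

definition mat_l2_norm :: "real^'n^'n \<Rightarrow> real" where
  "mat_l2_norm A = onorm (\<lambda>x. A *v x)"

definition indvec :: "'n set \<Rightarrow> real^'n" where
  "indvec S = (\<chi> i. if i \<in> S then 1 else 0)"

definition submodular :: "('n set \<Rightarrow> real) \<Rightarrow> bool" where
  "submodular h \<longleftrightarrow>
     (\<forall>R S j. R \<subseteq> S \<and> j \<notin> S \<longrightarrow>
        h (R \<union> {j}) - h R \<ge> h (S \<union> {j}) - h S)"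

definition gfun :: "real^'n \<Rightarrow> real^'n^'n \<Rightarrow> real^'n \<Rightarrow> real" where
  "gfun \<mu> D y = \<mu> \<bullet> y + sqrt (y \<bullet> (D *v y))"

definition sdp_common :: "real^'n^'n \<Rightarrow> bool" where
  "sdp_common D \<longleftrightarrow> symmetric_mat D
     \<and> (\<forall>r. 2 * (\<Sum>s\<in>UNIV. D $ r $ s) \<ge> D $ r $ r)
     \<and> (\<forall>r s. r \<noteq> s \<longrightarrow> D $ r $ s \<le> 0)"

definition feasible_L :: "real^'n^'n \<Rightarrow> real^'n^'n \<Rightarrow> bool" where
  "feasible_L \<Lambda> D \<longleftrightarrow> sdp_common D \<and> loewner_le 0 D \<and> loewner_le D \<Lambda>"

definition feasible_U :: "real^'n^'n \<Rightarrow> real^'n^'n \<Rightarrow> bool" where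
  "feasible_U \<Lambda> D \<longleftrightarrow> sdp_common D \<and> loewner_le \<Lambda> D"

definition optimal_for :: "(real^'n^'n \<Rightarrow> bool) \<Rightarrow> real^'n^'n \<Rightarrow> real^'n^'n \<Rightarrow> bool" where
  "optimal_for feas \<Lambda> D \<longleftrightarrow> feas D \<and>
     (\<forall>D'. feas D' \<longrightarrow> mat_l2_norm (D - \<Lambda>) \<le> mat_l2_norm (D' - \<Lambda>))"

end

theory Submission
  imports Defs
begin

text \<open>
  For S \<subseteq> [J] write q(S) = y_S' D y_S = \<Sum>_{r,s \<in> S} D_rs. Adding j \<notin> S raises q by
  D_jj + 2 \<Sum>_{s \<in> S} D_js. Since the off-diagonal entries of D are nonpositive, this increment
  decreases as S grows, and the row condition 2 \<Sum>_s D_js \<ge> D_jj keeps it nonnegative.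
  So q is nonnegative, monotone and has decreasing increments, and composing it with the concave
  increasing square root preserves submodularity; the linear part \<mu>'y is modular. The two
  feasibility statements follow because \<Delta>^L \<preceq> \<Lambda> \<preceq> \<Delta>^U orders the quadratic forms.
\<close>

definition set_quad :: "real^'n^'n \<Rightarrow> 'n set \<Rightarrow> real" where
  "set_quad D S = (\<Sum>r\<in>S. \<Sum>s\<in>S. D $ r $ s)"

definition marginal :: "real^'n^'n \<Rightarrow> 'n \<Rightarrow> 'n set \<Rightarrow> real" where
  "marginal D j S = D $ j $ j + 2 * (\<Sum>s\<in>S. D $ j $ s)"

lemma inner_indvec: "\<mu> \<bullet> indvec S = (\<Sum>i\<in>S. \<mu> $ i)"
  unfolding inner_vec_def indvec_def
  by (simp add: if_distrib sum.If_cases cong: if_cong)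

lemma quad_form_indvec: "indvec S \<bullet> (D *v indvec S) = set_quad D S"
proof -
  have ind: "(if P then 1 else 0) * x = (if P then x else 0)"
    "x * (if P then 1 else 0) = (if P then x else 0)" for P and x :: real
    by simp_all
  show ?thesis
    unfolding inner_vec_def indvec_def matrix_vector_mult_def set_quad_def
    by (simp add: ind sum.If_cases del: mult_1 mult_1_right)
qed

lemma gfun_indvec: "gfun \<mu> D (indvec S) = (\<Sum>i\<in>S. \<mu> $ i) + sqrt (set_quad D S)"
  unfolding gfun_def inner_indvec quad_form_indvec ..

lemma symmetric_matD: "symmetric_mat D \<Longrightarrow> D $ r $ s = D $ s $ r"
  unfolding symmetric_mat_def by (metis transpose_def vec_lambda_beta)

lemma set_quad_insert:
  assumes "symmetric_mat D" and "j \<notin> S"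
  shows "set_quad D (insert j S) = set_quad D S + marginal D j S"
proof -
  have "set_quad D (insert j S)
      = D $ j $ j + (\<Sum>s\<in>S. D $ j $ s) + (\<Sum>r\<in>S. D $ r $ j) + set_quad D S"
    using \<open>j \<notin> S\<close> by (simp add: set_quad_def sum.distrib)
  then show ?thesis
    using symmetric_matD[OF assms(1)] by (simp add: marginal_def)
qed

lemma marginal_antimono:
  assumes "sdp_common D" and "R \<subseteq> S" and "j \<notin> S"
  shows "marginal D j S \<le> marginal D j R"
proof -
  have "(\<Sum>s\<in>S. D $ j $ s) = (\<Sum>s\<in>R. D $ j $ s) + (\<Sum>s\<in>S - R. D $ j $ s)"
    using \<open>R \<subseteq> S\<close> by (metis add.commute finite sum.subset_diff)
  moreover have "(\<Sum>s\<in>S - R. D $ j $ s) \<le> 0"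
    using assms(1,3) unfolding sdp_common_def by (intro sum_nonpos) (metis DiffD1)
  ultimately show ?thesis
    by (simp add: marginal_def)
qed

text \<open>The increment is smallest for S = [J] - {j}, where it is the row condition.\<close>
lemma marginal_nonneg:
  assumes "sdp_common D" and "j \<notin> S"
  shows "0 \<le> marginal D j S"
proof -
  have "marginal D j (UNIV - {j}) \<le> marginal D j S"
    using marginal_antimono[OF assms(1), of S "UNIV - {j}" j] assms(2) by auto
  moreover have "(\<Sum>s\<in>UNIV. D $ j $ s) = D $ j $ j + (\<Sum>s\<in>UNIV - {j}. D $ j $ s)"
    by (simp add: sum.remove)
  moreover have "D $ j $ j \<le> 2 * (\<Sum>s\<in>UNIV. D $ j $ s)"
    using assms(1) unfolding sdp_common_def by auto
  ultimately show ?thesis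
    unfolding marginal_def by linarith
qed

lemma set_quad_mono:
  assumes "sdp_common D" and "R \<subseteq> S"
  shows "set_quad D R \<le> set_quad D S"
proof -
  have "set_quad D R \<le> set_quad D (R \<union> A)" for A
  proof (induction A rule: finite_induct[OF finite])
    case (2 j A)
    show ?case
    proof (cases "j \<in> R \<union> A")
      case False
      with assms(1) have "set_quad D (insert j (R \<union> A)) = set_quad D (R \<union> A) + marginal D j (R \<union> A)"
        "0 \<le> marginal D j (R \<union> A)"
        by (auto simp: sdp_common_def set_quad_insert marginal_nonneg)
      with 2 show ?thesis by simp
    qed (use 2 in \<open>simp add: insert_absorb\<close>)
  qed simp
  then show ?thesis
    using \<open>R \<subseteq> S\<close> by (metis Un_absorb1)
qed

lemma set_quad_nonneg: "sdp_common D \<Longrightarrow> 0 \<le> set_quad D S"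
  using set_quad_mono[of D "{}" S] by (simp add: set_quad_def)

lemma sqrt_increment_antimono:
  fixes a b d :: real
  assumes "0 \<le> a" "a \<le> b" "0 \<le> d"
  shows "sqrt (b + d) - sqrt b \<le> sqrt (a + d) - sqrt a"
proof -
  have "(b + d) * a \<le> (a + d) * b"
    using assms by (simp add: algebra_simps mult_right_mono)
  then have "sqrt (b + d) * sqrt a \<le> sqrt (a + d) * sqrt b"
    by (metis real_sqrt_le_mono real_sqrt_mult)
  then have "(sqrt (b + d) + sqrt a)\<^sup>2 \<le> (sqrt (a + d) + sqrt b)\<^sup>2"
    using assms by (simp add: power2_sum)
  then have "sqrt (b + d) + sqrt a \<le> sqrt (a + d) + sqrt b"
    by (rule power2_le_imp_le) (use assms in simp_all)
  then show ?thesis by simp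
qed

lemma submodular_gfun_indvec:
  fixes D :: "real^'n^'n" and \<mu> :: "real^'n"
  assumes "sdp_common D"
  shows "submodular (\<lambda>S. gfun \<mu> D (indvec S))"
  unfolding submodular_def
proof (intro allI impI, elim conjE)
  fix R S :: "'n set" and j :: 'n
  assume "R \<subseteq> S" and "j \<notin> S"
  then have "j \<notin> R" by auto
  have sym: "symmetric_mat D"
    using assms unfolding sdp_common_def by simp
  have "sqrt (set_quad D S + marginal D j S) - sqrt (set_quad D S)
      \<le> sqrt (set_quad D R + marginal D j S) - sqrt (set_quad D R)"
    using assms \<open>R \<subseteq> S\<close> \<open>j \<notin> S\<close>
    by (intro sqrt_increment_antimono set_quad_nonneg set_quad_mono marginal_nonneg)
  also have "\<dots> \<le> sqrt (set_quad D R + marginal D j R) - sqrt (set_quad D R)"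
    using marginal_antimono[OF assms \<open>R \<subseteq> S\<close> \<open>j \<notin> S\<close>] by simp
  finally show "gfun \<mu> D (indvec (S \<union> {j})) - gfun \<mu> D (indvec S)
      \<le> gfun \<mu> D (indvec (R \<union> {j})) - gfun \<mu> D (indvec R)"
    using \<open>j \<notin> S\<close> \<open>j \<notin> R\<close> by (simp add: gfun_indvec set_quad_insert[OF sym])
qed

lemma quad_form_mono_loewner:
  assumes "loewner_le A B"
  shows "x \<bullet> (A *v x) \<le> x \<bullet> (B *v x)"
proof -
  have "0 \<le> x \<bullet> ((B - A) *v x)"
    using assms unfolding loewner_le_def psd_def by simp
  then show ?thesis
    by (simp add: matrix_vector_mult_diff_rdistrib inner_diff_right)
qed

lemma gfun_mono_loewner: "loewner_le A B \<Longrightarrow> gfun \<mu> A y \<le> gfun \<mu> B y"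
  unfolding gfun_def by (simp add: quad_form_mono_loewner)

theorem proposition2:
  fixes \<mu> :: "real^'n" and T :: real and \<Lambda> DL DU :: "real^'n^'n"
  assumes "symmetric_mat \<Lambda>" and "pos_def \<Lambda>"
    and "optimal_for (feasible_L \<Lambda>) \<Lambda> DL"
    and "optimal_for (feasible_U \<Lambda>) \<Lambda> DU"
  shows "submodular (\<lambda>S. gfun \<mu> DL (indvec S))
       \<and> (\<forall>S. gfun \<mu> \<Lambda> (indvec S) \<le> T \<longrightarrow> gfun \<mu> DL (indvec S) \<le> T)
       \<and> submodular (\<lambda>S. gfun \<mu> DU (indvec S))
       \<and> (\<forall>S. gfun \<mu> DU (indvec S) \<le> T \<longrightarrow> gfun \<mu> \<Lambda> (indvec S) \<le> T)"
proof -
  have L: "sdp_common DL" "loewner_le DL \<Lambda>"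
    using assms(3) unfolding optimal_for_def feasible_L_def by auto
  have U: "sdp_common DU" "loewner_le \<Lambda> DU"
    using assms(4) unfolding optimal_for_def feasible_U_def by auto
  show ?thesis
    using submodular_gfun_indvec[OF L(1)] submodular_gfun_indvec[OF U(1)]
      gfun_mono_loewner[OF L(2)] gfun_mono_loewner[OF U(2)]
    by (meson order.trans)
qed

end
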